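(* Let $G$ be a finite graph (multiple edges and self-loops allowed) with $I$ edges, $V$ vertices and $c$ connected components, and let $L=I-V+c$. Then there exist an orientation of the edges of $G$ and $L$ simple cycles $\gamma_1,\ldots,\gamma_L$ of $G$ with the following properties: - each $\gamma_j$ is a directed (oriented) cycle with respect to this orientation; - the edge-indicator vectors of $\gamma_1,\dots,\gamma_L$ in $\mathbb{R}^I$ are linearly independent. Consequently, assigning to each edge $\ell_i$ the "energy" $E_i=\sum_{j=1}^L a_{ij}e_j$ with $a_{ij}=1$ if $\ell_i\in\gamma_j$ and $a_{ij}=0$ otherwise, where $e_1,\dots,e_L$ are free real parameters (loop energies), gives the following parametrization. Every energy flow conserved at each vertex (total energy flowing in equals total energy flowing out, with zero external energies) is of this form. In this parametrization each leg's energy is a linear combination of $e_1,\dots,e_L$ with coefficients $0$ or $1$, and the flow of each $e_j$ runs along the oriented minimal loop $\gamma_j$.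
   Context: A simple cycle in a graph is a closed sequence of distinct edges through distinct vertices; a self-loop is a simple cycle of length one. A cycle is directed (oriented) with respect to an orientation of the edges if all its edges have coherent orientations along the cycle: at each shared vertex, one edge points into the vertex and the next points out of it. *)

theory Defs
  imports Complex_Main
begin

text \<open>A finite multigraph: vertex set V, edge set E (edge labels, so multiple edges
are allowed), and ends e = the two endpoints of edge e (possibly equal: self-loop).
The order of the pair in ends is irrelevant for the undirected graph.\<close>

definition multigraph :: "'v set \<Rightarrow> 'e set \<Rightarrow> ('e \<Rightarrow> 'v \<times> 'v) \<Rightarrow> bool" where
  "multigraph V E ends \<longleftrightarrow> finite V \<and> finite E \<and>
     (\<forall>e\<in>E. fst (ends e) \<in> V \<and> snd (ends e) \<in> V)"

definition adjacent :: "'e set \<Rightarrow> ('e \<Rightarrow> 'v \<times> 'v) \<Rightarrow> 'v \<Rightarrow> 'v \<Rightarrow> bool" where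
  "adjacent E ends u v \<longleftrightarrow> (\<exists>e\<in>E. {fst (ends e), snd (ends e)} = {u, v})"

definition components :: "'v set \<Rightarrow> 'e set \<Rightarrow> ('e \<Rightarrow> 'v \<times> 'v) \<Rightarrow> 'v set set" where
  "components V E ends = V // {(u, v). u \<in> V \<and> v \<in> V \<and> (adjacent E ends)\<^sup>*\<^sup>* u v}"

definition num_components :: "'v set \<Rightarrow> 'e set \<Rightarrow> ('e \<Rightarrow> 'v \<times> 'v) \<Rightarrow> nat" where
  "num_components V E ends = card (components V E ends)"

definition orientation :: "'e set \<Rightarrow> ('e \<Rightarrow> 'v \<times> 'v) \<Rightarrow> ('e \<Rightarrow> 'v \<times> 'v) \<Rightarrow> bool" where
  "orientation E ends ori \<longleftrightarrow>
     (\<forall>e\<in>E. ori e = ends e \<or> ori e = prod.swap (ends e))"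

text \<open>A self-loop is a simple cycle of length one.\<close>
definition simple_cycle :: "'e set \<Rightarrow> ('e \<Rightarrow> 'v \<times> 'v) \<Rightarrow> 'e list \<Rightarrow> 'v list \<Rightarrow> bool" where
  "simple_cycle E ends es vs \<longleftrightarrow>
     length es = length vs \<and> length es \<ge> 1 \<and> distinct es \<and> distinct vs \<and> set es \<subseteq> E \<and>
     (\<forall>i < length es. {fst (ends (es ! i)), snd (ends (es ! i))}
                       = {vs ! i, vs ! ((i + 1) mod length es)})"

definition directed_cycle :: "('e \<Rightarrow> 'v \<times> 'v) \<Rightarrow> 'e list \<Rightarrow> 'v list \<Rightarrow> bool" where
  "directed_cycle ori es vs \<longleftrightarrow>
     (\<forall>i < length es. ori (es ! i) = (vs ! i, vs ! ((i + 1) mod length es)))"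

definition conserved :: "'v set \<Rightarrow> 'e set \<Rightarrow> ('e \<Rightarrow> 'v \<times> 'v) \<Rightarrow> ('e \<Rightarrow> real) \<Rightarrow> bool" where
  "conserved V E ori f \<longleftrightarrow>
     (\<forall>v\<in>V. (\<Sum>e\<in>{e\<in>E. snd (ori e) = v}. f e) = (\<Sum>e\<in>{e\<in>E. fst (ori e) = v}. f e))"

end

theory Submission
  imports Defs
begin

text \<open>Add the edges one at a time, keeping an orientation, a family of directed simple cycles and
  the invariant that every non-bridge edge lies on one of them.
  An edge joining two components is a bridge of the new graph: a conserved flow vanishes on it
  (nothing else crosses the cut around a component), so the old cycles still span.
  An edge \<open>e\<close> from \<open>p\<close> to \<open>q\<close> inside a component is closed into a new cycle: after turning the
  bridges that separate \<open>p\<close> from \<open>q\<close> towards \<open>p\<close>, every edge on a walk from \<open>q\<close> to \<open>p\<close> can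
  be traversed forwards (along its cycle, if it is not a bridge), so \<open>q\<close> reaches \<open>p\<close> by a directed
  path, which \<open>e\<close> closes.  Being the only cycle through \<open>e\<close>, it keeps the family independent,
  and subtracting \<open>f e\<close> times it reduces a conserved flow \<open>f\<close> to one vanishing on \<open>e\<close>.
  In both cases the number of cycles grows exactly as \<open>|E| + c - |V|\<close>.\<close>

section \<open>Connectivity and bridges\<close>

abbreviation linked :: "'e set \<Rightarrow> ('e \<Rightarrow> 'v \<times> 'v) \<Rightarrow> 'v \<Rightarrow> 'v \<Rightarrow> bool" where
  "linked H ends \<equiv> (adjacent H ends)\<^sup>*\<^sup>*"

lemma adjacent_sym: "adjacent H ends x y \<Longrightarrow> adjacent H ends y x"
  unfolding adjacent_def by (metis insert_commute)

lemma linked_sym: "linked H ends x y \<Longrightarrow> linked H ends y x"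
  by (metis adjacent_sym symp_rtranclp sympD sympI)

lemma linked_mono:
  assumes "H \<subseteq> H'" "linked H ends x y"
  shows "linked H' ends x y"
proof -
  have "adjacent H ends \<le> adjacent H' ends"
    using assms(1) unfolding adjacent_def by blast
  then show ?thesis
    using assms(2) by (metis rtranclp_mono predicate2D)
qed

lemma linked_edge: "e \<in> H \<Longrightarrow> linked H ends (fst (ends e)) (snd (ends e))"
  unfolding adjacent_def by (rule r_into_rtranclp) blast

lemma linked_insert_iff:
  assumes "ends e = (p, q)"
  shows "linked (insert e H) ends x y \<longleftrightarrow>
    linked H ends x y \<or> linked H ends x p \<and> linked H ends q y \<or> linked H ends x q \<and> linked H ends p y"
    (is "?lhs \<longleftrightarrow> ?rhs x y")
proof
  show "?lhs \<Longrightarrow> ?rhs x y"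
  proof (induction rule: rtranclp_induct)
    case (step y z)
    have "adjacent H ends y z \<or> (y, z) = (p, q) \<or> (y, z) = (q, p)"
      using step(2) assms unfolding adjacent_def by (auto simp: doubleton_eq_iff)
    with step(3) show ?case
      by (auto intro: rtranclp.rtrancl_into_rtrancl rtranclp_trans dest: linked_sym)
  qed simp
next
  have pq: "linked (insert e H) ends p q"
    using linked_edge[of e "insert e H" ends] assms by simp
  have "linked H ends a b \<Longrightarrow> linked (insert e H) ends a b" for a b
    by (rule linked_mono[rotated]) auto
  then show "?rhs x y \<Longrightarrow> ?lhs"
    using pq linked_sym[OF pq] by (blast intro: rtranclp_trans)
qed

lemma linked_insert_linked:
  assumes "linked H ends (fst (ends e)) (snd (ends e))"
  shows "linked (insert e H) ends = linked H ends"
proof (intro ext iffI)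
  fix x y
  obtain p q where pq: "ends e = (p, q)" by fastforce
  have "linked H ends p q" using assms pq by simp
  note qp = linked_sym[OF this]
  assume "linked (insert e H) ends x y"
  then show "linked H ends x y"
    unfolding linked_insert_iff[of ends e, OF pq]
    by (elim disjE conjE) (blast intro: rtranclp_trans \<open>linked H ends p q\<close> qp)+
next
  fix x y
  assume "linked H ends x y"
  then show "linked (insert e H) ends x y"
    by (rule linked_mono[rotated]) auto
qed

definition is_bridge :: "'e set \<Rightarrow> ('e \<Rightarrow> 'v \<times> 'v) \<Rightarrow> 'e \<Rightarrow> bool" where
  "is_bridge H ends f \<longleftrightarrow> \<not> linked (H - {f}) ends (fst (ends f)) (snd (ends f))"

lemma is_bridge_insert_new:
  "e \<notin> H \<Longrightarrow> is_bridge (insert e H) ends e \<longleftrightarrow> \<not> linked H ends (fst (ends e)) (snd (ends e))"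
  unfolding is_bridge_def by simp

lemma is_bridge_insertD:
  assumes "is_bridge (insert e H) ends f"
  shows "is_bridge H ends f"
proof -
  have "H - {f} \<subseteq> insert e H - {f}" by blast
  then show ?thesis
    using assms linked_mono unfolding is_bridge_def by metis
qed

lemma is_bridge_insert_unlinked:
  assumes pq: "ends e = (p, q)" and "\<not> linked H ends p q" "f \<in> H" "is_bridge H ends f"
  shows "is_bridge (insert e H) ends f"
proof -
  obtain a b where ab: "ends f = (a, b)" by fastforce
  have "e \<noteq> f"
    using assms linked_edge[of f H ends] by auto
  then have eq: "insert e H - {f} = insert e (H - {f})" by auto
  have lift: "linked (H - {f}) ends x y \<Longrightarrow> linked H ends x y" for x y
    by (rule linked_mono[rotated]) auto
  have "linked H ends a b"
    using linked_edge[of f H ends] assms(3) ab by simp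
  then have "\<not> (linked (H - {f}) ends a p \<and> linked (H - {f}) ends q b)"
    and "\<not> (linked (H - {f}) ends a q \<and> linked (H - {f}) ends p b)"
    using assms(2) by (meson lift linked_sym rtranclp_trans)+
  then show ?thesis
    using assms(4) unfolding is_bridge_def eq linked_insert_iff[of ends e, OF pq] ab by simp
qed

lemma is_bridge_insert_linked_iff:
  assumes pq: "ends e = (p, q)" and "linked H ends p q" "e \<notin> H" "f \<in> insert e H"
  shows "is_bridge (insert e H) ends f \<longleftrightarrow> f \<noteq> e \<and> is_bridge H ends f \<and> linked (H - {f}) ends p q"
proof (cases "f = e")
  case True
  then show ?thesis
    using is_bridge_insert_new[of e H ends] assms(1-3) by simp
next
  case False
  then have "f \<in> H"
    using assms(4) by simp
  obtain a b where ab: "ends f = (a, b)" by fastforce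
  let ?L = "linked (H - {f}) ends" and ?L' = "linked (insert e (H - {f})) ends"
  have eq: "insert e H - {f} = insert e (H - {f})"
    using False by auto
  have "linked (insert f (H - {f})) ends p q"
    using assms(2) \<open>f \<in> H\<close> by (simp add: insert_absorb)
  then have detour: "?L p q \<or> ?L p a \<and> ?L b q \<or> ?L p b \<and> ?L a q"
    unfolding linked_insert_iff[of ends f, OF ab] .
  have "?L' a b \<longleftrightarrow> ?L a b" if "?L p q"
    using that by (simp add: linked_insert_linked pq)
  moreover have "?L' a b" if "\<not> ?L p q"
    using detour that
  proof (elim disjE conjE)
    assume "?L p a" "?L b q"
    then show ?thesis
      using linked_sym linked_insert_iff[of ends e, OF pq] by metis
  next
    assume "?L p b" "?L a q"
    then show ?thesis
      using linked_insert_iff[of ends e, OF pq] by blast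
  qed simp
  ultimately show ?thesis
    using False unfolding is_bridge_def eq ab by auto
qed

definition component_of :: "'v set \<Rightarrow> 'e set \<Rightarrow> ('e \<Rightarrow> 'v \<times> 'v) \<Rightarrow> 'v \<Rightarrow> 'v set" where
  "component_of V H ends x = {y \<in> V. linked H ends x y}"

lemma num_components_eq_card_image: "num_components V H ends = card (component_of V H ends ` V)"
proof -
  have "components V H ends = component_of V H ends ` V"
    unfolding components_def quotient_def component_of_def by (auto simp: Image_def)
  then show ?thesis
    unfolding num_components_def by simp
qed

lemma component_of_eq_iff:
  assumes "x \<in> V" "y \<in> V"
  shows "component_of V H ends x = component_of V H ends y \<longleftrightarrow> linked H ends x y"
proof
  assume "component_of V H ends x = component_of V H ends y"
  then show "linked H ends x y"
    using assms rtranclp.rtrancl_refl[of "adjacent H ends" y] unfolding component_of_def by blast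
next
  assume xy: "linked H ends x y"
  then show "component_of V H ends x = component_of V H ends y"
    using linked_sym[OF xy] unfolding component_of_def by (blast intro: rtranclp_trans)
qed

lemma num_components_no_edges: "num_components V {} ends = card V"
proof -
  have "linked {} ends x y \<Longrightarrow> x = y" for x y
    by (induction rule: rtranclp_induct) (auto simp: adjacent_def)
  then have "inj_on (component_of V {} ends) V"
    by (auto intro: inj_onI simp: component_of_eq_iff)
  then show ?thesis
    unfolding num_components_eq_card_image by (rule card_image)
qed

lemma num_components_insert_linked:
  "linked H ends (fst (ends e)) (snd (ends e)) \<Longrightarrow>
    num_components V (insert e H) ends = num_components V H ends"
  unfolding num_components_eq_card_image component_of_def by (simp add: linked_insert_linked)

lemma card_image_merge:
  assumes "finite Q" "A \<in> Q" "B \<in> Q" "A \<noteq> B" "A \<union> B \<notin> Q"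
  shows "card ((\<lambda>C. if C \<in> {A, B} then A \<union> B else C) ` Q) + 1 = card Q"
proof -
  let ?merge = "\<lambda>C. if C \<in> {A, B} then A \<union> B else C"
  have "inj_on ?merge (Q - {B})"
    using assms(5) by (auto intro!: inj_onI split: if_splits)
  then have "card (?merge ` (Q - {B})) = card (Q - {B})"
    by (rule card_image)
  moreover have "?merge ` Q = ?merge ` (Q - {B})"
    using assms(2,4) by (auto simp: image_iff)
  ultimately show ?thesis
    using card_Suc_Diff1[OF assms(1,3)] by simp
qed

lemma component_of_insert_unlinked:
  assumes pq: "ends e = (p, q)" and "p \<in> V" "q \<in> V" "\<not> linked H ends p q" "x \<in> V"
  shows "component_of V (insert e H) ends x =
    (if component_of V H ends x \<in> {component_of V H ends p, component_of V H ends q}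
     then component_of V H ends p \<union> component_of V H ends q else component_of V H ends x)"
proof -
  have qp: "\<not> linked H ends q p"
    using assms(4) linked_sym by metis
  have classes: "component_of V H ends x \<in> {component_of V H ends p, component_of V H ends q}
      \<longleftrightarrow> linked H ends x p \<or> linked H ends x q"
    using assms(2,3,5) by (simp add: component_of_eq_iff)
  show ?thesis
  proof (cases "linked H ends x p \<or> linked H ends x q")
    case True
    then show ?thesis
      using classes assms(4) qp linked_sym[of H ends x]
      unfolding component_of_def linked_insert_iff[of ends e, OF pq]
      by (auto intro: rtranclp_trans)
  next
    case False
    then show ?thesis
      using classes linked_sym[of H ends x]
      unfolding component_of_def linked_insert_iff[of ends e, OF pq] by auto
  qed
qed

lemma num_components_insert_unlinked:
  assumes pq: "ends e = (p, q)" and "p \<in> V" "q \<in> V" "\<not> linked H ends p q" "finite V"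
  shows "num_components V (insert e H) ends + 1 = num_components V H ends"
proof -
  let ?c = "component_of V H ends"
  have "component_of V (insert e H) ends ` V =
      (\<lambda>C. if C \<in> {?c p, ?c q} then ?c p \<union> ?c q else C) ` ?c ` V"
    unfolding image_image using component_of_insert_unlinked[OF assms(1-4)] by (rule image_cong[OF refl])
  moreover have "?c p \<noteq> ?c q"
    using assms(2-4) by (simp add: component_of_eq_iff)
  moreover have "?c p \<union> ?c q \<notin> ?c ` V"
  proof
    assume "?c p \<union> ?c q \<in> ?c ` V"
    then obtain x where "?c x = ?c p \<union> ?c q"
      by auto
    then have "p \<in> ?c x" "q \<in> ?c x"
      using assms(2,3) unfolding component_of_def by auto
    then show False
      using assms(4) linked_sym[of H ends x p] unfolding component_of_def by (blast intro: rtranclp_trans)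
  qed
  ultimately show ?thesis
    using card_image_merge[of "?c ` V" "?c p" "?c q"] assms(2,3,5)
    unfolding num_components_eq_card_image by simp
qed

section \<open>Orientations and directed walks\<close>

definition arc :: "('e \<Rightarrow> 'v \<times> 'v) \<Rightarrow> 'e set \<Rightarrow> 'v \<Rightarrow> 'v \<Rightarrow> bool" where
  "arc ori H x y \<longleftrightarrow> (\<exists>g\<in>H. ori g = (x, y))"

abbreviation reaches :: "('e \<Rightarrow> 'v \<times> 'v) \<Rightarrow> 'e set \<Rightarrow> 'v \<Rightarrow> 'v \<Rightarrow> bool" where
  "reaches ori H \<equiv> (arc ori H)\<^sup>*\<^sup>*"

lemma orientation_subset: "orientation H ends ori \<Longrightarrow> H' \<subseteq> H \<Longrightarrow> orientation H' ends ori"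
  unfolding orientation_def by blast

lemma orientation_endpoints:
  "orientation H ends ori \<Longrightarrow> f \<in> H \<Longrightarrow> {fst (ori f), snd (ori f)} = {fst (ends f), snd (ends f)}"
  unfolding orientation_def by (cases "ends f") auto

lemma orientation_cases:
  assumes "orientation H ends ori" "f \<in> H" "{fst (ends f), snd (ends f)} = {a, b}"
  shows "ori f = (a, b) \<or> ori f = (b, a)"
  using orientation_endpoints[OF assms(1,2)] assms(3) by (cases "ori f") (auto simp: doubleton_eq_iff)

lemma reaches_linked:
  assumes "orientation H ends ori" "reaches ori H x y"
  shows "linked H ends x y"
proof -
  have "arc ori H \<le> adjacent H ends"
    using orientation_endpoints[OF assms(1)] unfolding arc_def adjacent_def by fastforce
  then show ?thesis
    using assms(2) by (metis rtranclp_mono predicate2D)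
qed

lemma reaches_avoid:
  assumes "reaches ori H x y" "f \<in> H" "ori f = (a, b)"
  shows "reaches ori (H - {f}) x y \<or> reaches ori H b y"
  using assms(1)
proof (induction rule: converse_rtranclp_induct)
  case (step x z)
  then obtain g where g: "g \<in> H" "ori g = (x, z)"
    unfolding arc_def by blast
  show ?case
  proof (cases "g = f")
    case True
    then show ?thesis
      using g assms(3) step(2) by simp
  next
    case False
    then have "arc ori (H - {f}) x z"
      using g unfolding arc_def by blast
    then show ?thesis
      using step(3) converse_rtranclp_into_rtranclp[of "arc ori (H - {f})"] by blast
  qed
qed simp

definition directed_path :: "('e \<Rightarrow> 'v \<times> 'v) \<Rightarrow> 'e list \<Rightarrow> 'v list \<Rightarrow> bool" where
  "directed_path ori es vs \<longleftrightarrow> length vs = Suc (length es) \<and> distinct vs \<and>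
     (\<forall>i<length es. ori (es ! i) = (vs ! i, vs ! Suc i))"

lemma reaches_directed_path:
  assumes "reaches ori H x y"
  shows "\<exists>es vs. directed_path ori es vs \<and> set es \<subseteq> H \<and> hd vs = x \<and> last vs = y"
  using assms
proof (induction rule: converse_rtranclp_induct)
  case base
  show ?case
    by (rule exI[of _ "[]"], rule exI[of _ "[y]"]) (simp add: directed_path_def)
next
  case (step x z)
  from step(1) obtain g where g: "g \<in> H" "ori g = (x, z)"
    unfolding arc_def by blast
  from step(3) obtain es vs where
    path: "directed_path ori es vs" "set es \<subseteq> H" "hd vs = z" "last vs = y"
    by blast
  then have len: "length vs = Suc (length es)" and "vs \<noteq> []"
    unfolding directed_path_def by auto
  show ?case
  proof (cases "x \<in> set vs")
    case False
    have "directed_path ori (g # es) (x # vs)"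
      using path(1,3) g False \<open>vs \<noteq> []\<close> unfolding directed_path_def
      by (auto simp: nth_Cons hd_conv_nth split: nat.split)
    then show ?thesis
      using path g \<open>vs \<noteq> []\<close> by (intro exI[of _ "g # es"] exI[of _ "x # vs"]) auto
  next
    case True
    then obtain k where k: "k < length vs" "vs ! k = x"
      by (auto simp: in_set_conv_nth)
    have "directed_path ori (drop k es) (drop k vs)"
      using path(1) k(1) unfolding directed_path_def by (auto simp: add.commute)
    moreover have "set (drop k es) \<subseteq> H"
      using path(2) set_drop_subset by fast
    ultimately show ?thesis
      using path(4) k by (intro exI[of _ "drop k es"] exI[of _ "drop k vs"]) (auto simp: hd_drop_conv_nth)
  qed
qed

lemma directed_path_reaches:
  assumes "directed_path ori es vs"
  shows "reaches ori (set es) (hd vs) (last vs)"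
proof -
  have "reaches ori (set es) (vs ! 0) (vs ! i)" if "i \<le> length es" for i
    using that
  proof (induction i)
    case (Suc i)
    then have "arc ori (set es) (vs ! i) (vs ! Suc i)"
      using assms unfolding directed_path_def arc_def by (metis Suc_le_lessD nth_mem)
    with Suc show ?case
      by (simp add: rtranclp.rtrancl_into_rtrancl)
  qed simp
  moreover have "vs \<noteq> []" "length vs = Suc (length es)"
    using assms unfolding directed_path_def by auto
  ultimately show ?thesis
    by (simp add: hd_conv_nth last_conv_nth)
qed

lemma directed_cycle_reaches:
  assumes "directed_cycle ori es vs" "length vs = length es" "set es \<subseteq> H" "f \<in> set es"
  shows "reaches ori H (snd (ori f)) (fst (ori f))"
proof -
  let ?k = "length es"
  have step: "arc ori H (vs ! i) (vs ! (Suc i mod ?k))" if "i < ?k" for i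
    using assms(1,3) that unfolding directed_cycle_def arc_def by (metis Suc_eq_plus1 nth_mem subsetD)
  have around: "reaches ori H (vs ! j) (vs ! ((j + d) mod ?k))" if "j < ?k" for j d
  proof (induction d)
    case (Suc d)
    have "(j + d) mod ?k < ?k"
      using that by (intro mod_less_divisor) auto
    from step[OF this] have "arc ori H (vs ! ((j + d) mod ?k)) (vs ! ((j + Suc d) mod ?k))"
      by (simp add: mod_Suc_eq)
    with Suc show ?case
      by (rule rtranclp.rtrancl_into_rtrancl)
  qed (use that in simp)
  from assms(4) obtain i where i: "i < ?k" "es ! i = f"
    by (auto simp: in_set_conv_nth)
  then have f: "ori f = (vs ! i, vs ! (Suc i mod ?k))"
    using assms(1) unfolding directed_cycle_def by auto
  have "(Suc i mod ?k + (?k - 1)) mod ?k = (Suc i + (?k - 1)) mod ?k"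
    by (rule mod_add_left_eq)
  also have "Suc i + (?k - 1) = i + ?k"
    using i(1) by simp
  finally have "(Suc i mod ?k + (?k - 1)) mod ?k = i"
    using i(1) by simp
  moreover have "Suc i mod ?k < ?k"
    using i(1) by (intro mod_less_divisor) auto
  ultimately show ?thesis
    using around[of "Suc i mod ?k" "?k - 1"] f by simp
qed

lemma directed_cycle_simple:
  assumes "orientation E ends ori" "set es \<subseteq> E" "length vs = length es" "es \<noteq> []"
    "distinct vs" "directed_cycle ori es vs"
  shows "simple_cycle E ends es vs"
proof -
  have tails: "fst (ori (es ! i)) = vs ! i" if "i < length es" for i
    using assms(6) that unfolding directed_cycle_def by simp
  have "distinct es"
    using assms(3,5) tails unfolding distinct_conv_nth by metis
  moreover have "{fst (ends (es ! i)), snd (ends (es ! i))} = {vs ! i, vs ! ((i + 1) mod length es)}"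
    if "i < length es" for i
    using orientation_endpoints[OF assms(1), of "es ! i"] assms(2,6) that nth_mem
    unfolding directed_cycle_def by fastforce
  ultimately show ?thesis
    using assms(2-5) unfolding simple_cycle_def by (simp add: Suc_leI)
qed

lemma directed_cycle_close_path:
  assumes "directed_path ori pes pvs" "hd pvs = q" "last pvs = p" "e \<notin> set pes"
  shows "directed_cycle (ori(e := (p, q))) (e # pes) (p # butlast pvs)"
  unfolding directed_cycle_def
proof (intro allI impI)
  let ?m = "length pes" and ?vs = "p # butlast pvs" and ?o = "ori(e := (p, q))"
  have len: "length pvs = Suc ?m" and arcs: "\<And>i. i < ?m \<Longrightarrow> ori (pes ! i) = (pvs ! i, pvs ! Suc i)"
    using assms(1) unfolding directed_path_def by auto
  have bl: "butlast pvs ! j = pvs ! j" if "j < ?m" for j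
    using that len by (simp add: nth_butlast)
  have first: "pvs ! 0 = q" and final: "pvs ! ?m = p"
  proof -
    have "pvs \<noteq> []"
      using len by auto
    then show "pvs ! 0 = q" "pvs ! ?m = p"
      using assms(2,3) len by (auto simp: hd_conv_nth last_conv_nth)
  qed
  fix i
  assume "i < length (e # pes)"
  then consider "i = 0" | j where "i = Suc j" "Suc j < ?m" | j where "i = Suc j" "Suc j = ?m"
    by (cases i) (auto simp: less_Suc_eq)
  then show "?o ((e # pes) ! i) = (?vs ! i, ?vs ! ((i + 1) mod length (e # pes)))"
  proof cases
    case 1
    then show ?thesis
      using first final bl[of 0] by (cases ?m) auto
  next
    case (2 j)
    then have "?o ((e # pes) ! i) = (pvs ! j, pvs ! Suc j)"
      using arcs[of j] assms(4) nth_mem[of j pes] by auto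
    moreover have "?vs ! i = pvs ! j" "?vs ! ((i + 1) mod length (e # pes)) = pvs ! Suc j"
      using 2 bl[of j] bl[of "Suc j"] by auto
    ultimately show ?thesis
      by simp
  next
    case (3 j)
    then have j: "j < ?m" by simp
    have "?o ((e # pes) ! i) = (pvs ! j, pvs ! Suc j)"
      using 3(1) j arcs[of j] assms(4) nth_mem[of j pes] by auto
    moreover have "?vs ! i = pvs ! j"
      using 3(1) j bl[of j] by simp
    moreover have "(i + 1) mod length (e # pes) = 0"
      using 3 by simp
    ultimately show ?thesis
      using final 3(2) by simp
  qed
qed

lemma simple_directed_cycle_close_path:
  assumes "orientation H ends ori" "e \<notin> H" "ends e = (p, q)"
    "directed_path ori pes pvs" "set pes \<subseteq> H" "hd pvs = q" "last pvs = p"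
  shows "simple_cycle (insert e H) ends (e # pes) (p # butlast pvs)"
    and "directed_cycle (ori(e := (p, q))) (e # pes) (p # butlast pvs)"
proof -
  show dir: "directed_cycle (ori(e := (p, q))) (e # pes) (p # butlast pvs)"
    using directed_cycle_close_path assms(2,4-7) by fast
  have "pvs \<noteq> []" "distinct pvs" "length pvs = Suc (length pes)"
    using assms(4) unfolding directed_path_def by auto
  then have "distinct (p # butlast pvs)" "length (p # butlast pvs) = length (e # pes)"
    using assms(7) append_butlast_last_id[of pvs] distinct_append[of "butlast pvs" "[last pvs]"] by auto
  moreover have "orientation (insert e H) ends (ori(e := (p, q)))"
    using assms(1,3) unfolding orientation_def by auto
  ultimately show "simple_cycle (insert e H) ends (e # pes) (p # butlast pvs)"
    using directed_cycle_simple[OF _ _ _ _ _ dir] assms(5) by auto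
qed

section \<open>Conserved flows\<close>

abbreviation edge_indicator :: "'e list \<Rightarrow> 'e \<Rightarrow> real" where
  "edge_indicator es i \<equiv> if i \<in> set es then 1 else 0"

lemma conserved_cong:
  assumes "\<And>e. e \<in> H \<Longrightarrow> ori e = ori' e" "\<And>e. e \<in> H \<Longrightarrow> f e = g e"
  shows "conserved V H ori f \<longleftrightarrow> conserved V H ori' g"
proof -
  have "{e \<in> H. snd (ori e) = v} = {e \<in> H. snd (ori' e) = v}"
    "{e \<in> H. fst (ori e) = v} = {e \<in> H. fst (ori' e) = v}" for v
    using assms(1) by auto
  moreover have "sum f {e \<in> H. P e} = sum g {e \<in> H. P e}" for P
    using assms(2) by (intro sum.cong) auto
  ultimately show ?thesis
    unfolding conserved_def by simp
qed

lemma sum_filter_insert: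
  assumes "finite H" "e \<notin> H"
  shows "(\<Sum>g\<in>{g \<in> insert e H. P g}. f g) = (if P e then f e else 0) + (\<Sum>g\<in>{g \<in> H. P g}. f g)"
proof -
  have "{g \<in> insert e H. P g} = (if P e then insert e {g \<in> H. P g} else {g \<in> H. P g})"
    by auto
  then show ?thesis
    using assms by simp
qed

lemma conserved_insert_zero:
  assumes "finite H" "e \<notin> H" "f e = 0"
  shows "conserved V (insert e H) ori f \<longleftrightarrow> conserved V H ori f"
  unfolding conserved_def sum_filter_insert[OF assms(1,2)] assms(3) by simp

lemma conserved_diff_scaled:
  "conserved V H ori f \<Longrightarrow> conserved V H ori g \<Longrightarrow> conserved V H ori (\<lambda>i. f i - c * g i)"
  unfolding conserved_def by (simp add: sum_subtractf sum_distrib_left[symmetric])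

lemma conserved_lincomb:
  assumes "\<And>j. j < n \<Longrightarrow> conserved V H ori (g j)"
  shows "conserved V H ori (\<lambda>i. \<Sum>j<n. g j i * x j)"
proof -
  have swap: "(\<Sum>e\<in>A. \<Sum>j<n. g j e * x j) = (\<Sum>j<n. (\<Sum>e\<in>A. g j e) * x j)" for A
    unfolding sum_distrib_right by (rule sum.swap)
  show ?thesis
    using assms unfolding conserved_def swap by (intro ballI sum.cong refl) simp
qed

lemma sum_rotate:
  fixes g :: "nat \<Rightarrow> 'a::comm_monoid_add"
  shows "(\<Sum>i<k. g (Suc i mod k)) = (\<Sum>i<k. g i)"
proof (cases k)
  case (Suc m)
  have "(\<Sum>i<m. g (Suc i mod Suc m)) = (\<Sum>i<m. g (Suc i))"
    by (intro sum.cong) auto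
  then have "(\<Sum>i<Suc m. g (Suc i mod Suc m)) = (\<Sum>i<m. g (Suc i)) + g 0"
    by simp
  also have "\<dots> = (\<Sum>i<Suc m. g i)"
    unfolding sum.lessThan_Suc_shift by (rule add.commute)
  finally show ?thesis
    using Suc by simp
qed simp

lemma sum_edge_indicator:
  assumes "finite H" "set es \<subseteq> H" "distinct es"
  shows "(\<Sum>g\<in>{g \<in> H. P g}. edge_indicator es g) = (\<Sum>i<length es. if P (es ! i) then 1 else 0)"
proof -
  have "(\<Sum>g\<in>{g \<in> H. P g}. edge_indicator es g) = (\<Sum>g\<in>set es. if P g then 1 else 0)"
  proof -
    have "{g \<in> H. P g} \<inter> set es = set es \<inter> Collect P"
      using assms(2) by auto
    then show ?thesis
      using assms(1,2) by (simp add: sum.If_cases)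
  qed
  also have "\<dots> = (\<Sum>i<length es. if P (es ! i) then 1 else 0)"
    using assms(3) by (simp add: sum.distinct_set_conv_list sum_list_sum_nth atLeast0LessThan)
  finally show ?thesis .
qed

lemma directed_cycle_conserved:
  assumes "finite H" "set es \<subseteq> H" "distinct es" "length vs = length es" "directed_cycle ori es vs"
  shows "conserved V H ori (edge_indicator es)"
  unfolding conserved_def
proof
  fix v
  let ?k = "length es"
  have arcs: "ori (es ! i) = (vs ! i, vs ! (Suc i mod ?k))" if "i < ?k" for i
    using assms(5) that unfolding directed_cycle_def by simp
  have "(\<Sum>g\<in>{g \<in> H. snd (ori g) = v}. edge_indicator es g) = (\<Sum>i<?k. if vs ! (Suc i mod ?k) = v then 1 else 0)"
    unfolding sum_edge_indicator[OF assms(1-3)] using arcs by (intro sum.cong) auto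
  also have "\<dots> = (\<Sum>i<?k. if vs ! i = v then 1 else 0)"
    by (rule sum_rotate)
  also have "\<dots> = (\<Sum>g\<in>{g \<in> H. fst (ori g) = v}. edge_indicator es g)"
    unfolding sum_edge_indicator[OF assms(1-3)] using arcs by (intro sum.cong) auto
  finally show "(\<Sum>g\<in>{g \<in> H. snd (ori g) = v}. edge_indicator es g) =
      (\<Sum>g\<in>{g \<in> H. fst (ori g) = v}. edge_indicator es g)" .
qed

lemma conserved_cut:
  assumes "finite E" "finite C" "C \<subseteq> V" "conserved V E ori f"
  shows "(\<Sum>g\<in>{g \<in> E. snd (ori g) \<in> C}. f g) = (\<Sum>g\<in>{g \<in> E. fst (ori g) \<in> C}. f g)"
proof -
  have fibres: "(\<Sum>g\<in>{g \<in> E. h g \<in> C}. f g) = (\<Sum>v\<in>C. \<Sum>g\<in>{g \<in> E. h g = v}. f g)" for h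
  proof -
    have "(\<Sum>v\<in>C. \<Sum>g\<in>{g \<in> {g \<in> E. h g \<in> C}. h g = v}. f g) = (\<Sum>g\<in>{g \<in> E. h g \<in> C}. f g)"
      using assms(1,2) by (intro sum.group) auto
    moreover have "{g \<in> {g \<in> E. h g \<in> C}. h g = v} = {g \<in> E. h g = v}" if "v \<in> C" for v
      using that by auto
    ultimately show ?thesis
      by simp
  qed
  show ?thesis
    unfolding fibres using assms(3,4) unfolding conserved_def by (intro sum.cong[OF refl]) auto
qed

text \<open>Summing conservation over the component of \<open>p\<close> in \<open>H\<close>: every edge other than \<open>e\<close>
  has both ends inside it or both outside, so only \<open>e\<close> crosses the cut.\<close>

lemma bridge_flow_zero:
  assumes "finite V" "finite H" "e \<notin> H" "ends e = (p, q)" "\<not> linked H ends p q"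
    "\<forall>g\<in>insert e H. fst (ends g) \<in> V \<and> snd (ends g) \<in> V"
    "orientation (insert e H) ends ori" "conserved V (insert e H) ori f"
  shows "f e = 0"
proof -
  let ?C = "component_of V H ends p"
  have "?C \<subseteq> V" "finite ?C"
    using assms(1) unfolding component_of_def by auto
  then have cut: "(\<Sum>g\<in>{g \<in> insert e H. snd (ori g) \<in> ?C}. f g) = (\<Sum>g\<in>{g \<in> insert e H. fst (ori g) \<in> ?C}. f g)"
    by (intro conserved_cut[OF _ _ _ assms(8)]) (use assms(2) in auto)
  have "snd (ori g) \<in> ?C \<longleftrightarrow> fst (ori g) \<in> ?C" if "g \<in> H" for g
  proof -
    have edge: "linked H ends (fst (ends g)) (snd (ends g))"
      using linked_edge[of g H ends] that .
    have "linked H ends (fst (ori g)) (snd (ori g))"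
      using edge linked_sym[OF edge] orientation_endpoints[OF assms(7), of g] that
      by (auto simp: doubleton_eq_iff)
    moreover have "fst (ori g) \<in> V" "snd (ori g) \<in> V"
      using assms(6) orientation_endpoints[OF assms(7), of g] that by (auto simp: doubleton_eq_iff)
    ultimately show ?thesis
      unfolding component_of_def using linked_sym[of H ends "fst (ori g)" "snd (ori g)"]
      by (blast intro: rtranclp_trans)
  qed
  then have inner: "{g \<in> H. snd (ori g) \<in> ?C} = {g \<in> H. fst (ori g) \<in> ?C}"
    by auto
  have "p \<in> ?C" "q \<notin> ?C"
    using assms(4-6) unfolding component_of_def by force+
  moreover have "ori e = (p, q) \<or> ori e = (q, p)"
    using assms(4,7) unfolding orientation_def by auto
  ultimately show ?thesis
    using cut unfolding sum_filter_insert[OF assms(2,3)] inner by auto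
qed

section \<open>Spans of cycle indicator vectors\<close>

definition independent_cycles :: "'e set \<Rightarrow> (nat \<Rightarrow> 'e list) \<Rightarrow> nat \<Rightarrow> bool" where
  "independent_cycles H es n \<longleftrightarrow>
     (\<forall>a. (\<forall>i\<in>H. (\<Sum>j<n. a j * edge_indicator (es j) i) = 0) \<longrightarrow> (\<forall>j<n. a j = 0))"

definition in_cycle_span :: "'e set \<Rightarrow> (nat \<Rightarrow> 'e list) \<Rightarrow> nat \<Rightarrow> ('e \<Rightarrow> real) \<Rightarrow> bool" where
  "in_cycle_span H es n f \<longleftrightarrow> (\<exists>x. \<forall>i\<in>H. f i = (\<Sum>j<n. edge_indicator (es j) i * x j))"

lemma independent_cycles_mono:
  "independent_cycles H es n \<Longrightarrow> H \<subseteq> H' \<Longrightarrow> independent_cycles H' es n"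
  unfolding independent_cycles_def by blast

lemma in_cycle_span_insert_zero:
  assumes "in_cycle_span H es n f" "f e = 0" "\<forall>j<n. e \<notin> set (es j)"
  shows "in_cycle_span (insert e H) es n f"
  using assms unfolding in_cycle_span_def by auto

lemma independent_cycles_extend:
  assumes "independent_cycles H es n" "\<forall>j<n. e \<notin> set (es j)" "e \<in> set c"
  shows "independent_cycles (insert e H) (es(n := c)) (Suc n)"
  unfolding independent_cycles_def
proof (rule allI, rule impI)
  fix a :: "nat \<Rightarrow> real"
  assume "\<forall>i\<in>insert e H. (\<Sum>j<Suc n. a j * edge_indicator ((es(n := c)) j) i) = 0"
  moreover have "(\<Sum>j<n. a j * edge_indicator ((es(n := c)) j) i) = (\<Sum>j<n. a j * edge_indicator (es j) i)"
    for i by (intro sum.cong) auto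
  ultimately have zero: "\<forall>i\<in>insert e H. (\<Sum>j<n. a j * edge_indicator (es j) i) + a n * edge_indicator c i = 0"
    by simp
  then have "a n = 0"
    using assms(2,3) by (simp add: sum.neutral)
  then have "\<forall>j<n. a j = 0"
    using assms(1) zero unfolding independent_cycles_def by simp
  with \<open>a n = 0\<close> show "\<forall>j<Suc n. a j = 0"
    by (simp add: less_Suc_eq)
qed

lemma in_cycle_span_extend:
  assumes "in_cycle_span H es n (\<lambda>i. f i - f e * edge_indicator c i)"
    "\<forall>j<n. e \<notin> set (es j)" "e \<in> set c"
  shows "in_cycle_span (insert e H) (es(n := c)) (Suc n) f"
proof -
  obtain x where x: "\<forall>i\<in>H. f i - f e * edge_indicator c i = (\<Sum>j<n. edge_indicator (es j) i * x j)"
    using assms(1) unfolding in_cycle_span_def by blast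
  have decomp: "f i = (\<Sum>j<n. edge_indicator (es j) i * x j) + edge_indicator c i * f e"
    if "i \<in> insert e H" for i
  proof (cases "i = e")
    case True
    have "(\<Sum>j<n. edge_indicator (es j) e * x j) = 0"
      using assms(2) by (intro sum.neutral) auto
    then show ?thesis
      using True assms(3) by simp
  next
    case False
    with that x have "f i - f e * edge_indicator c i = (\<Sum>j<n. edge_indicator (es j) i * x j)"
      by simp
    then show ?thesis
      by (simp only: mult.commute[of "f e"])
  qed
  have old: "(\<Sum>j<n. edge_indicator ((es(n := c)) j) i * (x(n := f e)) j) =
      (\<Sum>j<n. edge_indicator (es j) i * x j)" for i
    by (intro sum.cong) auto
  show ?thesis
    unfolding in_cycle_span_def
  proof (intro exI[of _ "x(n := f e)"] ballI)
    fix i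
    assume "i \<in> insert e H"
    then show "f i = (\<Sum>j<Suc n. edge_indicator ((es(n := c)) j) i * (x(n := f e)) j)"
      using decomp[of i] old[of i] by simp
  qed
qed

lemma in_cycle_span_conserved:
  assumes "finite H" "in_cycle_span H es n f"
    "\<forall>j<n. set (es j) \<subseteq> H \<and> distinct (es j) \<and> length (vs j) = length (es j) \<and> directed_cycle ori (es j) (vs j)"
  shows "conserved V H ori f"
proof -
  obtain x where x: "\<forall>i\<in>H. f i = (\<Sum>j<n. edge_indicator (es j) i * x j)"
    using assms(2) unfolding in_cycle_span_def by blast
  have "conserved V H ori (\<lambda>i. \<Sum>j<n. edge_indicator (es j) i * x j)"
    using directed_cycle_conserved assms(1,3) by (intro conserved_lincomb) blast
  then show ?thesis
    using x conserved_cong[of H ori ori f] by simp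
qed

section \<open>Closing a directed cycle through a new edge\<close>

lemma linked_Diff_bridges:
  assumes "finite B" "\<forall>f\<in>B. f \<in> H \<and> is_bridge H ends f \<and> linked (H - {f}) ends p q"
    "linked H ends p q"
  shows "linked (H - B) ends p q"
  using assms
proof (induction B rule: finite_induct)
  case (insert f B)
  obtain a b where ab: "ends f = (a, b)" by fastforce
  let ?L = "linked (H - insert f B) ends" and ?Lf = "linked (H - {f}) ends"
  have f: "f \<in> H" "is_bridge H ends f" "?Lf p q" and IH: "linked (H - B) ends p q"
    using insert by auto
  have lift: "?L x y \<Longrightarrow> ?Lf x y" for x y
    by (rule linked_mono[rotated]) auto
  have "H - B = insert f (H - insert f B)"
    using f(1) insert(2) by auto
  with IH have "?L p q \<or> ?L p a \<and> ?L b q \<or> ?L p b \<and> ?L a q"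
    using linked_insert_iff[of ends f, OF ab] by metis
  moreover have "\<not> ?Lf a b"
    using f(2) ab unfolding is_bridge_def by simp
  ultimately show ?case
    using f(3) lift linked_sym rtranclp_trans[of "adjacent (H - {f}) ends"] by metis
qed simp

lemma rtranclp_enters:
  assumes "r\<^sup>*\<^sup>* x y" "\<not> P x" "P y"
  shows "\<exists>a b. r a b \<and> \<not> P a \<and> P b"
  using assms by (induction rule: converse_rtranclp_induct) auto

lemma reaches_if_bridges_point_toward:
  assumes ori: "orientation H ends ori" and "finite H" "linked H ends p q"
    and cyc: "\<forall>f\<in>H. \<not> is_bridge H ends f \<longrightarrow> reaches ori H (snd (ori f)) (fst (ori f))"
    and toward: "\<forall>f\<in>H. is_bridge H ends f \<and> \<not> linked (H - {f}) ends p q \<longrightarrow>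
      linked (H - {f}) ends (snd (ori f)) p"
  shows "reaches ori H q p"
proof (rule ccontr)
  assume no_reach: "\<not> reaches ori H q p"
  define B where "B = {f \<in> H. is_bridge H ends f \<and> linked (H - {f}) ends p q}"
  have "linked (H - B) ends p q"
    using assms(2,3) by (intro linked_Diff_bridges) (auto simp: B_def)
  from rtranclp_enters[OF linked_sym[OF this], of "\<lambda>x. reaches ori H x p"] no_reach
  obtain a b where "adjacent (H - B) ends a b" "\<not> reaches ori H a p" "reaches ori H b p"
    by auto
  then obtain f where f: "f \<in> H" "f \<notin> B" "{fst (ends f), snd (ends f)} = {a, b}"
    and a: "\<not> reaches ori H a p" and b: "reaches ori H b p"
    unfolding adjacent_def by blast
  have "ori f \<noteq> (a, b)"
    using a b f(1) converse_rtranclp_into_rtranclp[of "arc ori H" a b] unfolding arc_def by blast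
  then have ba: "ori f = (b, a)"
    using orientation_cases[OF ori f(1,3)] by simp
  have bridge: "is_bridge H ends f"
    using cyc f(1) ba a b rtranclp_trans[of "arc ori H" a b p] by auto
  then have "linked (H - {f}) ends a p"
    using toward f(1,2) ba unfolding B_def by auto
  moreover have "reaches ori (H - {f}) b p"
    using reaches_avoid[OF b f(1) ba] a by simp
  then have "linked (H - {f}) ends b p"
    using reaches_linked[OF orientation_subset[OF ori]] by blast
  ultimately have "linked (H - {f}) ends a b"
    using linked_sym rtranclp_trans[of "adjacent (H - {f}) ends" a p b] by metis
  then show False
    using bridge f(3) linked_sym unfolding is_bridge_def doubleton_eq_iff by metis
qed

text \<open>Turning the bridges that separate \<open>p\<close> from \<open>q\<close> towards the side of \<open>p\<close> lets \<open>q\<close> reach \<open>p\<close>,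
  so that a new edge oriented from \<open>p\<close> to \<open>q\<close> closes a directed cycle.\<close>

definition orient_toward :: "'e set \<Rightarrow> ('e \<Rightarrow> 'v \<times> 'v) \<Rightarrow> 'v \<Rightarrow> 'v \<Rightarrow> ('e \<Rightarrow> 'v \<times> 'v) \<Rightarrow> 'e \<Rightarrow> 'v \<times> 'v" where
  "orient_toward H ends p q ori0 f =
     (if linked (H - {f}) ends p q then ori0 f
      else if linked (H - {f}) ends (snd (ends f)) p then ends f else prod.swap (ends f))"

lemma orientation_orient_toward:
  "orientation H ends ori0 \<Longrightarrow> orientation H ends (orient_toward H ends p q ori0)"
  unfolding orientation_def orient_toward_def by auto

lemma orient_toward_head:
  assumes "f \<in> H" "linked H ends p q" "\<not> linked (H - {f}) ends p q"
  shows "linked (H - {f}) ends (snd (orient_toward H ends p q ori0 f)) p"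
proof (cases "linked (H - {f}) ends (snd (ends f)) p")
  case False
  obtain a b where ab: "ends f = (a, b)" by fastforce
  have "linked (insert f (H - {f})) ends p q"
    using assms(1,2) by (simp add: insert_absorb)
  then have "linked (H - {f}) ends p a"
    using assms(3) False ab linked_sym[of "H - {f}" ends p b] unfolding linked_insert_iff[of ends f, OF ab] by auto
  then show ?thesis
    using assms(3) False ab linked_sym[of "H - {f}" ends p a] unfolding orient_toward_def by auto
qed (use assms(3) in \<open>simp add: orient_toward_def\<close>)

section \<open>The inductive construction\<close>

lemma simple_cycle_mono: "simple_cycle E ends es vs \<Longrightarrow> E \<subseteq> E' \<Longrightarrow> simple_cycle E' ends es vs"
  unfolding simple_cycle_def by blast

lemma directed_cycle_fun_upd:
  "e \<notin> set es \<Longrightarrow> directed_cycle (ori(e := d)) es vs \<longleftrightarrow> directed_cycle ori es vs"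
  unfolding directed_cycle_def by (metis fun_upd_other nth_mem)

lemma conserved_fun_upd: "e \<notin> H \<Longrightarrow> conserved V H (ori(e := d)) f \<longleftrightarrow> conserved V H ori f"
  by (rule conserved_cong) auto

definition directed_cycle_basis ::
  "'v set \<Rightarrow> 'e set \<Rightarrow> ('e \<Rightarrow> 'v \<times> 'v) \<Rightarrow> ('e \<Rightarrow> 'v \<times> 'v) \<Rightarrow> (nat \<Rightarrow> 'e list) \<Rightarrow> (nat \<Rightarrow> 'v list) \<Rightarrow> nat \<Rightarrow> bool"
where
  "directed_cycle_basis V H ends ori es vs n \<longleftrightarrow>
     orientation H ends ori \<and>
     (\<forall>j<n. simple_cycle H ends (es j) (vs j) \<and> directed_cycle ori (es j) (vs j)) \<and>
     independent_cycles H es n \<and>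
     (\<forall>f. conserved V H ori f \<longrightarrow> in_cycle_span H es n f)"

lemma directed_cycle_basis_avoids:
  "directed_cycle_basis V H ends ori es vs n \<Longrightarrow> e \<notin> H \<Longrightarrow> \<forall>j<n. e \<notin> set (es j)"
  unfolding directed_cycle_basis_def simple_cycle_def by blast

lemma directed_cycle_basis_conserved_iff:
  assumes "directed_cycle_basis V H ends ori es vs n" "finite H"
  shows "conserved V H ori f \<longleftrightarrow> in_cycle_span H es n f"
proof
  assume "in_cycle_span H es n f"
  moreover have "\<forall>j<n. set (es j) \<subseteq> H \<and> distinct (es j) \<and> length (vs j) = length (es j) \<and>
      directed_cycle ori (es j) (vs j)"
    using assms(1) unfolding directed_cycle_basis_def simple_cycle_def by auto
  ultimately show "conserved V H ori f"
    using in_cycle_span_conserved[OF assms(2)] by blast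
qed (use assms(1) in \<open>simp add: directed_cycle_basis_def\<close>)

lemma directed_cycle_basis_insert_bridge:
  assumes basis: "directed_cycle_basis V H ends ori es vs n"
    and "finite V" "finite H" "e \<notin> H" "ends e = (p, q)" "\<not> linked H ends p q"
    "\<forall>g\<in>insert e H. fst (ends g) \<in> V \<and> snd (ends g) \<in> V" "d = ends e \<or> d = prod.swap (ends e)"
  shows "directed_cycle_basis V (insert e H) ends (ori(e := d)) es vs n"
proof -
  have avoid: "\<forall>j<n. e \<notin> set (es j)"
    using directed_cycle_basis_avoids[OF basis assms(4)] .
  have ori': "orientation (insert e H) ends (ori(e := d))"
    using basis assms(8) unfolding directed_cycle_basis_def orientation_def by auto
  have "in_cycle_span (insert e H) es n f" if "conserved V (insert e H) (ori(e := d)) f" for f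
  proof -
    have "f e = 0"
      using bridge_flow_zero[OF assms(2-7) ori' that] .
    then have "conserved V H (ori(e := d)) f"
      using that conserved_insert_zero[OF assms(3,4)] by blast
    then have "conserved V H ori f"
      by (rule conserved_fun_upd[OF assms(4), THEN iffD1])
    then have "in_cycle_span H es n f"
      using basis unfolding directed_cycle_basis_def by blast
    then show ?thesis
      using \<open>f e = 0\<close> avoid by (rule in_cycle_span_insert_zero)
  qed
  with basis ori' avoid show ?thesis
    unfolding directed_cycle_basis_def
    by (auto simp: directed_cycle_fun_upd intro: simple_cycle_mono independent_cycles_mono)
qed

lemma directed_cycle_basis_insert_cycle:
  assumes basis: "directed_cycle_basis V H ends ori es vs n"
    and "finite H" "e \<notin> H" "d = ends e \<or> d = prod.swap (ends e)"
    and cycle: "simple_cycle (insert e H) ends c cv" "directed_cycle (ori(e := d)) c cv" "e \<in> set c"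
  shows "directed_cycle_basis V (insert e H) ends (ori(e := d)) (es(n := c)) (vs(n := cv)) (Suc n)"
proof -
  have avoid: "\<forall>j<n. e \<notin> set (es j)"
    using directed_cycle_basis_avoids[OF basis assms(3)] .
  have ori': "orientation (insert e H) ends (ori(e := d))"
    using basis assms(4) unfolding directed_cycle_basis_def orientation_def by auto
  have "conserved V (insert e H) (ori(e := d)) (edge_indicator c)"
    using cycle(1,2) assms(2) unfolding simple_cycle_def by (intro directed_cycle_conserved) auto
  then have "in_cycle_span (insert e H) (es(n := c)) (Suc n) f"
    if "conserved V (insert e H) (ori(e := d)) f" for f
  proof -
    let ?g = "\<lambda>i. f i - f e * edge_indicator c i"
    have cg: "conserved V (insert e H) (ori(e := d)) ?g"
      using that \<open>conserved V (insert e H) (ori(e := d)) (edge_indicator c)\<close>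
      by (rule conserved_diff_scaled)
    have "?g e = 0"
      using cycle(3) by simp
    from conserved_insert_zero[of H e ?g, OF assms(2,3) this, THEN iffD1, OF cg]
    have "conserved V H ori ?g"
      by (rule conserved_fun_upd[OF assms(3), THEN iffD1])
    then show ?thesis
      using basis avoid cycle(3) unfolding directed_cycle_basis_def by (blast intro: in_cycle_span_extend)
  qed
  moreover have "independent_cycles (insert e H) (es(n := c)) (Suc n)"
    using basis avoid cycle(3) unfolding directed_cycle_basis_def by (blast intro: independent_cycles_extend)
  moreover have "simple_cycle (insert e H) ends (es j) (vs j) \<and> directed_cycle (ori(e := d)) (es j) (vs j)"
    if "j < n" for j
    using basis avoid that unfolding directed_cycle_basis_def
    by (auto simp: directed_cycle_fun_upd intro: simple_cycle_mono)
  ultimately show ?thesis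
    using ori' cycle(1,2) unfolding directed_cycle_basis_def by (auto simp: less_Suc_eq)
qed

text \<open>The orientation of the bridges is left to the caller (\<open>ori0\<close>): when a new edge puts
  some bridges on a cycle, the induction first re-orients them with \<open>orient_toward\<close>.\<close>

definition bridge_respecting_basis ::
  "'v set \<Rightarrow> 'e set \<Rightarrow> ('e \<Rightarrow> 'v \<times> 'v) \<Rightarrow> ('e \<Rightarrow> 'v \<times> 'v) \<Rightarrow> ('e \<Rightarrow> 'v \<times> 'v)
    \<Rightarrow> (nat \<Rightarrow> 'e list) \<Rightarrow> (nat \<Rightarrow> 'v list) \<Rightarrow> nat \<Rightarrow> bool"
where
  "bridge_respecting_basis V H ends ori0 ori es vs n \<longleftrightarrow>
     directed_cycle_basis V H ends ori es vs n \<and>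
     n + card V = card H + num_components V H ends \<and>
     (\<forall>f\<in>H. is_bridge H ends f \<longrightarrow> ori f = ori0 f) \<and>
     (\<forall>f\<in>H. \<not> is_bridge H ends f \<longrightarrow> (\<exists>j<n. f \<in> set (es j)))"

lemma bridge_respecting_basisD:
  assumes "bridge_respecting_basis V H ends ori0 ori es vs n"
  shows "directed_cycle_basis V H ends ori es vs n"
    and "n + card V = card H + num_components V H ends"
    and "f \<in> H \<Longrightarrow> is_bridge H ends f \<Longrightarrow> ori f = ori0 f"
    and "f \<in> H \<Longrightarrow> \<not> is_bridge H ends f \<Longrightarrow> \<exists>j<n. f \<in> set (es j)"
  using assms unfolding bridge_respecting_basis_def by auto

lemma bridge_respecting_basis_empty:
  "orientation {} ends ori0 \<Longrightarrow> bridge_respecting_basis V {} ends ori0 ori0 es vs 0"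
  unfolding bridge_respecting_basis_def directed_cycle_basis_def independent_cycles_def
    in_cycle_span_def
  by (simp add: num_components_no_edges)

lemma bridge_respecting_basis_insert_bridge:
  assumes basis: "bridge_respecting_basis V H ends ori0 ori es vs n"
    and "finite V" "finite H" "e \<notin> H" "ends e = (p, q)" "\<not> linked H ends p q"
    "\<forall>g\<in>insert e H. fst (ends g) \<in> V \<and> snd (ends g) \<in> V" "orientation (insert e H) ends ori0"
  shows "bridge_respecting_basis V (insert e H) ends ori0 (ori(e := ori0 e)) es vs n"
proof -
  have "ori0 e = ends e \<or> ori0 e = prod.swap (ends e)"
    using assms(8) unfolding orientation_def by blast
  then have "directed_cycle_basis V (insert e H) ends (ori(e := ori0 e)) es vs n"
    using basis assms(2-7) unfolding bridge_respecting_basis_def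
    by (intro directed_cycle_basis_insert_bridge) auto
  moreover have "num_components V (insert e H) ends + 1 = num_components V H ends"
    using assms(5-7) num_components_insert_unlinked[OF assms(5) _ _ assms(6,2)] by auto
  moreover have "\<not> is_bridge H ends f" if "f \<in> H" "\<not> is_bridge (insert e H) ends f" for f
    using is_bridge_insert_unlinked[OF assms(5,6)] that by blast
  moreover have "is_bridge (insert e H) ends e"
    using is_bridge_insert_new[of e H ends] assms(4-6) by simp
  ultimately show ?thesis
    using basis assms(3,4) is_bridge_insertD[of e H ends] unfolding bridge_respecting_basis_def
    by auto
qed

lemma directed_path_crosses_cut:
  assumes "orientation H ends ori" "directed_path ori es vs" "set es \<subseteq> H"
    "\<not> linked (H - {f}) ends (hd vs) (last vs)"
  shows "f \<in> set es"
proof (rule ccontr)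
  assume "f \<notin> set es"
  then have "set es \<subseteq> H - {f}"
    using assms(3) by blast
  moreover have "linked (set es) ends (hd vs) (last vs)"
    using reaches_linked[OF orientation_subset[OF assms(1,3)] directed_path_reaches[OF assms(2)]] .
  ultimately have "linked (H - {f}) ends (hd vs) (last vs)"
    by (rule linked_mono)
  with assms(4) show False ..
qed

lemma bridge_respecting_basis_closing_path:
  assumes basis: "bridge_respecting_basis V H ends (orient_toward H ends p q ori0) ori es vs n"
    and "finite H" "linked H ends p q"
  shows "\<exists>pes pvs. directed_path ori pes pvs \<and> set pes \<subseteq> H \<and> hd pvs = q \<and> last pvs = p"
proof -
  have ori: "orientation H ends ori"
    using bridge_respecting_basisD(1)[OF basis] unfolding directed_cycle_basis_def by blast
  have "reaches ori H (snd (ori f)) (fst (ori f))" if f: "f \<in> H" "\<not> is_bridge H ends f" for f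
  proof -
    obtain j where j: "j < n" "f \<in> set (es j)"
      using bridge_respecting_basisD(4)[OF basis f] by blast
    then have "simple_cycle H ends (es j) (vs j)" "directed_cycle ori (es j) (vs j)"
      using bridge_respecting_basisD(1)[OF basis] unfolding directed_cycle_basis_def by blast+
    then show ?thesis
      using directed_cycle_reaches j(2) unfolding simple_cycle_def by metis
  qed
  moreover have "linked (H - {f}) ends (snd (ori f)) p"
    if "f \<in> H" "is_bridge H ends f" "\<not> linked (H - {f}) ends p q" for f
  proof -
    have "ori f = orient_toward H ends p q ori0 f"
      using bridge_respecting_basisD(3)[OF basis that(1,2)] .
    then show ?thesis
      using orient_toward_head[OF that(1) assms(3) that(3)] by simp
  qed
  ultimately have "reaches ori H q p"
    using reaches_if_bridges_point_toward[OF ori assms(2,3)] by blast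
  then show ?thesis
    by (rule reaches_directed_path)
qed

lemma bridge_respecting_basis_insert_closing:
  assumes basis: "bridge_respecting_basis V H ends (orient_toward H ends p q ori0) ori es vs n"
    and "finite H" "e \<notin> H" "ends e = (p, q)" "linked H ends p q"
  shows "\<exists>c cv. bridge_respecting_basis V (insert e H) ends ori0 (ori(e := (p, q)))
    (es(n := c)) (vs(n := cv)) (Suc n)"
proof -
  note old = bridge_respecting_basisD[OF basis]
  have ori: "orientation H ends ori"
    using old(1) unfolding directed_cycle_basis_def by blast
  obtain pes pvs where path: "directed_path ori pes pvs" "set pes \<subseteq> H" "hd pvs = q" "last pvs = p"
    using bridge_respecting_basis_closing_path[OF basis assms(2,5)] by blast
  let ?c = "e # pes" and ?cv = "p # butlast pvs"
  have cycle: "simple_cycle (insert e H) ends ?c ?cv" "directed_cycle (ori(e := (p, q))) ?c ?cv"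
    using simple_directed_cycle_close_path[OF ori assms(3,4) path] by auto
  have "directed_cycle_basis V (insert e H) ends (ori(e := (p, q))) (es(n := ?c)) (vs(n := ?cv)) (Suc n)"
    using directed_cycle_basis_insert_cycle[OF old(1) assms(2,3) _ cycle] assms(4) by simp
  moreover have "Suc n + card V = card (insert e H) + num_components V (insert e H) ends"
    using old(2) num_components_insert_linked[of H ends e V] assms(2-5) by simp
  moreover have "(ori(e := (p, q))) f = ori0 f"
    if "f \<in> insert e H" "is_bridge (insert e H) ends f" for f
    using that old(3) is_bridge_insert_linked_iff[OF assms(4,5,3) that(1)]
    unfolding orient_toward_def by auto
  moreover have "\<exists>j<Suc n. f \<in> set ((es(n := ?c)) j)"
    if f: "f \<in> insert e H" "\<not> is_bridge (insert e H) ends f" for f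
  proof -
    from f consider "f = e" | "f \<in> H" "\<not> is_bridge H ends f" | "f \<in> H" "\<not> linked (H - {f}) ends p q"
      using is_bridge_insert_linked_iff[OF assms(4,5,3) f(1)] by auto
    then show ?thesis
    proof cases
      case 1
      then show ?thesis
        by (intro exI[of _ n]) simp
    next
      case 2
      then obtain j where "j < n" "f \<in> set (es j)"
        using old(4) by blast
      then show ?thesis
        by (intro exI[of _ j]) auto
    next
      case 3
      then have "f \<in> set pes"
        using directed_path_crosses_cut[OF ori path(1,2)] path(3,4) linked_sym by metis
      then show ?thesis
        by (intro exI[of _ n]) simp
    qed
  qed
  ultimately show ?thesis
    unfolding bridge_respecting_basis_def by blast
qed

lemma bridge_respecting_basis_exists:
  assumes "finite V" "finite H" "\<forall>g\<in>H. fst (ends g) \<in> V \<and> snd (ends g) \<in> V"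
    "orientation H ends ori0"
  shows "\<exists>ori es vs n. bridge_respecting_basis V H ends ori0 ori es vs n"
  using assms(2-4)
proof (induction H arbitrary: ori0 rule: finite_induct)
  case empty
  then show ?case
    using bridge_respecting_basis_empty by blast
next
  case (insert e H)
  obtain p q where pq: "ends e = (p, q)"
    by fastforce
  have V: "\<forall>g\<in>H. fst (ends g) \<in> V \<and> snd (ends g) \<in> V"
    using insert.prems(1) by simp
  have ori0: "orientation H ends ori0"
    using orientation_subset[OF insert.prems(2)] by blast
  show ?case
  proof (cases "linked H ends p q")
    case True
    then obtain ori es vs n where "bridge_respecting_basis V H ends (orient_toward H ends p q ori0) ori es vs n"
      using insert.IH[OF V orientation_orient_toward[OF ori0]] by blast
    then show ?thesis
      using bridge_respecting_basis_insert_closing[OF _ insert.hyps(1,2) pq True] by blast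
  next
    case False
    obtain ori es vs n where "bridge_respecting_basis V H ends ori0 ori es vs n"
      using insert.IH[OF V ori0] by blast
    then show ?thesis
      using bridge_respecting_basis_insert_bridge[OF _ assms(1) insert.hyps(1,2) pq False insert.prems]
      by blast
  qed
qed

theorem proposition1:
  fixes V :: "'v set" and E :: "'e set" and ends :: "'e \<Rightarrow> 'v \<times> 'v"
  assumes "multigraph V E ends"
  defines "L \<equiv> card E + num_components V E ends - card V"
  shows "\<exists>ori (es :: nat \<Rightarrow> 'e list) (vs :: nat \<Rightarrow> 'v list).
           orientation E ends ori \<and>
           (\<forall>j < L. simple_cycle E ends (es j) (vs j) \<and> directed_cycle ori (es j) (vs j)) \<and>
           (\<forall>a :: nat \<Rightarrow> real.
              (\<forall>i\<in>E. (\<Sum>j<L. a j * (if i \<in> set (es j) then 1 else 0)) = 0)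
              \<longrightarrow> (\<forall>j<L. a j = 0)) \<and>
           (\<forall>f :: 'e \<Rightarrow> real. conserved V E ori f \<longleftrightarrow>
              (\<exists>x :: nat \<Rightarrow> real. \<forall>i\<in>E.
                 f i = (\<Sum>j<L. (if i \<in> set (es j) then 1 else 0) * x j)))"
proof -
  have fin: "finite V" "finite E" and ends: "\<forall>g\<in>E. fst (ends g) \<in> V \<and> snd (ends g) \<in> V"
    using assms(1) unfolding multigraph_def by auto
  have "orientation E ends ends"
    unfolding orientation_def by simp
  then obtain ori es vs n where basis: "bridge_respecting_basis V E ends ends ori es vs n"
    using bridge_respecting_basis_exists[OF fin ends] by blast
  then have "n = L"
    using bridge_respecting_basisD(2) unfolding L_def by (metis add_diff_cancel_right')
  have cycles: "directed_cycle_basis V E ends ori es vs n"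
    using bridge_respecting_basisD(1)[OF basis] .
  moreover have "conserved V E ori f \<longleftrightarrow> in_cycle_span E es n f" for f
    using directed_cycle_basis_conserved_iff[OF cycles fin(2)] .
  ultimately show ?thesis
    unfolding directed_cycle_basis_def independent_cycles_def in_cycle_span_def \<open>n = L\<close>
    by blast
qed

end
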